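(* There exist two non-isomorphic clique complexes $K$ and $K'$ (with colored vertices) such that the Simplicial Weisfeiler–Leman (SWL) test cannot distinguish $K$ from $K'$, but there is a color-based filtration whose persistence diagrams for $K$ and $K'$ differ.
   Context: An abstract simplicial complex $K$ over a vertex set $V$ is a set of nonempty subsets of $V$ (simplices) closed under taking nonempty subsets; the clique complex of a graph has as simplices all cliques of the graph. Simplices carry colors (attributes). For a simplex $\sigma$, its boundary neighborhood is $\mathcal{B}(\sigma)=\{\tau\subset\sigma:\dim\tau=\dim\sigma-1\}$ and its upper-adjacency neighborhood is $\mathcal{N}_\uparrow(\sigma)=\{\sigma': \dim\sigma'=\dim\sigma,\ \exists\,\delta\in K \text{ with } \sigma\subset\delta,\ \sigma'\subset\delta,\ \dim\delta=\dim\sigma+1\}$. The Simplicial Weisfeiler–Leman test (Bodnar et al.) is the color-refinement procedure that iteratively updates the color of every simplex by hashing its current color together with the multiset of colors of its boundary neighbors and the multiset of (colors of) its upper-adjacent neighbors (including the color of the shared coface); two complexes are distinguished if at some iteration their multisets of simplex colors differ. A color-based filtration is a filtration $\emptyset=K_0\subset K_{\alpha_1}\subset\dots\subset K_{\alpha_n}=K$ induced by a filtering function $f$ applied to colors of simplices (e.g. vertex colors, with each simplex entering at the maximum value of $f$ over its vertices, or edge colors analogously); persistence diagrams record the (birth, death) pairs of homological features (connected components, cycles, etc.) along the filtration. *)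

theory Defs
  imports Complex_Main "HOL-Library.Multiset"
begin

text \<open>Vertices are natural numbers, vertex colours are natural numbers.
  A simplicial complex is a set of nonempty finite vertex sets.\<close>

definition clique_complex :: "nat set \<Rightarrow> (nat \<Rightarrow> nat \<Rightarrow> bool) \<Rightarrow> nat set set" where
  "clique_complex V E =
     {\<sigma>. \<sigma> \<noteq> {} \<and> finite \<sigma> \<and> \<sigma> \<subseteq> V \<and> (\<forall>x\<in>\<sigma>. \<forall>y\<in>\<sigma>. x \<noteq> y \<longrightarrow> E x y)}"

definition colored_iso :: "nat set set \<Rightarrow> (nat \<Rightarrow> nat) \<Rightarrow> nat set set \<Rightarrow> (nat \<Rightarrow> nat) \<Rightarrow> bool" where
  "colored_iso K c K' c' \<longleftrightarrow>
     (\<exists>h. bij_betw h (\<Union>K) (\<Union>K') \<and>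
          (\<forall>\<sigma>. \<sigma> \<subseteq> \<Union>K \<longrightarrow> (\<sigma> \<in> K \<longleftrightarrow> h ` \<sigma> \<in> K')) \<and>
          (\<forall>v\<in>\<Union>K. c' (h v) = c v))"

text \<open>Colours are represented without hashing, by the (injective) tree of
  information they encode.\<close>
datatype swlcol = Init "nat multiset" | Step swlcol "swlcol multiset" "(swlcol \<times> swlcol) multiset"

definition boundary_nbhd :: "nat set set \<Rightarrow> nat set \<Rightarrow> nat set set" where
  "boundary_nbhd K \<sigma> = {\<tau>\<in>K. \<tau> \<subseteq> \<sigma> \<and> Suc (card \<tau>) = card \<sigma>}"

definition upper_nbhd :: "nat set set \<Rightarrow> nat set \<Rightarrow> (nat set \<times> nat set) set" where
  "upper_nbhd K \<sigma> = {(\<sigma>', \<delta>). \<sigma>' \<in> K \<and> \<delta> \<in> K \<and> card \<sigma>' = card \<sigma> \<and>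
                        \<sigma> \<subseteq> \<delta> \<and> \<sigma>' \<subseteq> \<delta> \<and> card \<delta> = Suc (card \<sigma>)}"

primrec swl :: "nat set set \<Rightarrow> (nat \<Rightarrow> nat) \<Rightarrow> nat \<Rightarrow> nat set \<Rightarrow> swlcol" where
  "swl K c 0 \<sigma> = Init (image_mset c (mset_set \<sigma>))"
| "swl K c (Suc t) \<sigma> =
     Step (swl K c t \<sigma>)
          (image_mset (swl K c t) (mset_set (boundary_nbhd K \<sigma>)))
          (image_mset (\<lambda>(\<sigma>', \<delta>). (swl K c t \<sigma>', swl K c t \<delta>)) (mset_set (upper_nbhd K \<sigma>)))"

definition swl_distinguishes :: "nat set set \<Rightarrow> (nat \<Rightarrow> nat) \<Rightarrow> nat set set \<Rightarrow> (nat \<Rightarrow> nat) \<Rightarrow> bool" where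
  "swl_distinguishes K c K' c' \<longleftrightarrow>
     (\<exists>t. image_mset (swl K c t) (mset_set K) \<noteq> image_mset (swl K' c' t) (mset_set K'))"

text \<open>p-chains over GF(2) of a complex L: sets of p-simplices (simplices with p+1 vertices).\<close>
definition chains :: "nat set set \<Rightarrow> nat \<Rightarrow> nat set set set" where
  "chains L p = Pow {\<sigma>\<in>L. card \<sigma> = Suc p}"

definition bd :: "nat set set \<Rightarrow> nat set set" where
  "bd S = {\<tau>. \<tau> \<noteq> {} \<and> odd (card {\<sigma>\<in>S. \<tau> \<subseteq> \<sigma> \<and> card \<sigma> = Suc (card \<tau>)})}"

definition cycles :: "nat set set \<Rightarrow> nat \<Rightarrow> nat set set set" where
  "cycles L p = {S\<in>chains L p. bd S = {}}"

definition boundaries :: "nat set set \<Rightarrow> nat \<Rightarrow> nat set set set" where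
  "boundaries L p = bd ` chains L (Suc p)"

text \<open>Persistent Betti number: GF(2)-dimension of the image of H_p(L1) in H_p(L2)
  (for L1 a subcomplex of L2), i.e. of Z_p(L1) / (Z_p(L1) \<inter> B_p(L2));
  the dimension of a finite GF(2)-vector space is log2 of its cardinality.\<close>
definition pbetti :: "nat set set \<Rightarrow> nat set set \<Rightarrow> nat \<Rightarrow> real" where
  "pbetti L1 L2 p =
     log 2 (real (card (cycles L1 p)) / real (card (cycles L1 p \<inter> boundaries L2 p)))"

definition filt :: "(nat \<Rightarrow> nat) \<Rightarrow> (nat \<Rightarrow> real) \<Rightarrow> nat set \<Rightarrow> real" where
  "filt c f \<sigma> = Max ((\<lambda>v. f (c v)) ` \<sigma>)"

definition sub_le :: "nat set set \<Rightarrow> (nat \<Rightarrow> nat) \<Rightarrow> (nat \<Rightarrow> real) \<Rightarrow> real \<Rightarrow> nat set set" where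
  "sub_le K c f a = {\<sigma>\<in>K. filt c f \<sigma> \<le> a}"

definition sub_lt :: "nat set set \<Rightarrow> (nat \<Rightarrow> nat) \<Rightarrow> (nat \<Rightarrow> real) \<Rightarrow> real \<Rightarrow> nat set set" where
  "sub_lt K c f a = {\<sigma>\<in>K. filt c f \<sigma> < a}"

text \<open>Persistence diagrams, as multiplicity functions: in homological degree p,
  the multiplicity of the point (b, d) (d = None meaning death at infinity),
  via the standard inclusion-exclusion of persistent Betti numbers.\<close>
fun persistence_diagrams ::
  "nat set set \<Rightarrow> (nat \<Rightarrow> nat) \<Rightarrow> (nat \<Rightarrow> real) \<Rightarrow> nat \<Rightarrow> real \<times> real option \<Rightarrow> real" where
  "persistence_diagrams K c f p (b, Some d) =
     (if b < d then
        pbetti (sub_le K c f b) (sub_lt K c f d) p - pbetti (sub_le K c f b) (sub_le K c f d) p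
      - pbetti (sub_lt K c f b) (sub_lt K c f d) p + pbetti (sub_lt K c f b) (sub_le K c f d) p
      else 0)"
| "persistence_diagrams K c f p (b, None) =
     pbetti (sub_le K c f b) K p - pbetti (sub_lt K c f b) K p"

end

theory Submission
  imports Defs
begin

text \<open>Compare two disjoint squares with the octagon, all vertices coloured alike. Both graphs are
  triangle-free, so their clique complexes are the graphs themselves, and both are 2-regular. In
  such a complex every vertex has four upper adjacencies and no faces, and every edge has two
  boundary vertices and no cofaces, so by induction on the rounds all vertices share one SWL colour
  and all edges another; with 8 vertices and 8 edges on each side the SWL multisets agree. Under
  the constant filtration, however, the point (0, \<infinity>) of the degree-1 diagram counts
  independent cycles: two for the squares, one for the octagon. The complexes are not isomorphic
  because the octagon contains no 4-cycle.\<close>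

definition graph_complex :: "nat set \<Rightarrow> nat set set \<Rightarrow> nat set set" where
  "graph_complex V Ed = (\<lambda>v. {v}) ` V \<union> Ed"

definition neighbours :: "nat set set \<Rightarrow> nat \<Rightarrow> nat set" where
  "neighbours Ed v = {u. {v, u} \<in> Ed}"

lemma image_mset_mset_set_eq_replicate:
  assumes "\<And>a. a \<in> A \<Longrightarrow> f a = b"
  shows "image_mset f (mset_set A) = replicate_mset (card A) b"
proof (cases "finite A")
  case True
  then have "image_mset f (mset_set A) = image_mset (\<lambda>_. b) (mset_set A)"
    using assms by (intro image_mset_cong) simp
  then show ?thesis by (simp add: image_mset_const_eq)
qed simp

lemma even_card_doubleton_Int_iff:
  "a \<noteq> b \<Longrightarrow> even (card ({a, b} \<inter> S)) \<longleftrightarrow> (a \<in> S \<longleftrightarrow> b \<in> S)"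
  by (cases "a \<in> S"; cases "b \<in> S") (auto simp: Int_insert_left)

lemma card_incident_edges:
  assumes "\<And>e. e \<in> S \<Longrightarrow> card e = 2"
  shows "card {e \<in> S. v \<in> e} = card (neighbours S v)"
proof -
  have no_loop: "v \<notin> neighbours S v"
    using assms[of "{v}"] unfolding neighbours_def by auto
  have "inj_on (\<lambda>u. {v, u}) (neighbours S v)"
    using no_loop by (auto simp: inj_on_def doubleton_eq_iff)
  moreover have "(\<lambda>u. {v, u}) ` neighbours S v = {e \<in> S. v \<in> e}"
  proof (intro equalityI subsetI)
    fix e assume "e \<in> {e \<in> S. v \<in> e}"
    moreover from this obtain u where "e = {v, u}"
      using assms by (auto simp: card_2_iff)
    ultimately show "e \<in> (\<lambda>u. {v, u}) ` neighbours S v"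
      unfolding neighbours_def by auto
  qed (auto simp: neighbours_def)
  ultimately show ?thesis
    by (metis card_image)
qed

lemma neighbours_empty [simp]: "neighbours {} v = {}"
  unfolding neighbours_def by simp

lemma Union_graph_complex: "\<Union>Ed \<subseteq> V \<Longrightarrow> \<Union>(graph_complex V Ed) = V"
  unfolding graph_complex_def by auto

lemma colored_iso_graph_complexE:
  assumes "\<Union>Ed \<subseteq> V" and "colored_iso (graph_complex V Ed) c (graph_complex V' Ed') c'"
  obtains h where "inj_on h V" and "\<And>x y. {x, y} \<in> Ed \<Longrightarrow> x \<noteq> y \<Longrightarrow> {h x, h y} \<in> Ed'"
proof -
  obtain h where bij: "bij_betw h V (\<Union>(graph_complex V' Ed'))"
    and preserves:
      "\<And>\<sigma>. \<sigma> \<subseteq> V \<Longrightarrow> \<sigma> \<in> graph_complex V Ed \<Longrightarrow> h ` \<sigma> \<in> graph_complex V' Ed'"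
    using assms(2) unfolding colored_iso_def Union_graph_complex[OF assms(1)]
    by (elim exE conjE) blast
  have inj: "inj_on h V"
    using bij by (rule bij_betw_imp_inj_on)
  have "{h x, h y} \<in> Ed'" if xy: "{x, y} \<in> Ed" "x \<noteq> y" for x y
  proof -
    have "{x, y} \<subseteq> V"
      using assms(1) xy(1) by blast
    with xy have "{h x, h y} \<in> graph_complex V' Ed'"
      using preserves[of "{x, y}"] unfolding graph_complex_def by simp
    moreover have "h x \<noteq> h y"
      using inj xy(2) \<open>{x, y} \<subseteq> V\<close> by (auto dest: inj_onD)
    ultimately show ?thesis
      unfolding graph_complex_def by (auto simp: doubleton_eq_iff)
  qed
  with inj show ?thesis
    by (rule that)
qed

locale triangle_free_graph =
  fixes V :: "nat set" and Ed :: "nat set set"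
  assumes finite_vertices: "finite V"
    and card_edge: "e \<in> Ed \<Longrightarrow> card e = 2"
    and edge_subset: "e \<in> Ed \<Longrightarrow> e \<subseteq> V"
    and triangle_free:
      "\<lbrakk>{x, y} \<in> Ed; {y, z} \<in> Ed; {x, z} \<in> Ed; x \<noteq> y; y \<noteq> z; x \<noteq> z\<rbrakk> \<Longrightarrow> False"
begin

abbreviation K :: "nat set set" where
  "K \<equiv> graph_complex V Ed"

lemma finite_edges: "finite Ed"
  using finite_vertices by (intro finite_subset[of Ed "Pow V"]) (auto dest: edge_subset)

lemma edgeE:
  assumes "e \<in> Ed"
  obtains x y where "x \<noteq> y" "x \<in> V" "y \<in> V" "e = {x, y}"
  using card_edge[OF assms] edge_subset[OF assms] by (auto simp: card_2_iff)

lemma simplexE: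
  assumes "\<sigma> \<in> K"
  obtains (vertex) v where "v \<in> V" "\<sigma> = {v}" | (edge) "\<sigma> \<in> Ed"
  using assms unfolding graph_complex_def by blast

lemma card_simplex: "\<sigma> \<in> K \<Longrightarrow> card \<sigma> = 1 \<or> card \<sigma> = 2"
  by (elim simplexE) (auto simp: card_edge)

lemma singleton_simplex_iff: "{v} \<in> K \<longleftrightarrow> v \<in> V"
  using card_edge[of "{v}"] unfolding graph_complex_def by auto

lemma edge_simplex: "e \<in> Ed \<Longrightarrow> e \<in> K"
  unfolding graph_complex_def by blast

lemma clique_complex_eq: "clique_complex V (\<lambda>x y. {x, y} \<in> Ed) = K"
proof (intro equalityI subsetI)
  fix \<sigma> assume "\<sigma> \<in> clique_complex V (\<lambda>x y. {x, y} \<in> Ed)"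
  then have ne: "\<sigma> \<noteq> {}" and sub: "\<sigma> \<subseteq> V"
    and clique: "\<And>x y. x \<in> \<sigma> \<Longrightarrow> y \<in> \<sigma> \<Longrightarrow> x \<noteq> y \<Longrightarrow> {x, y} \<in> Ed"
    unfolding clique_complex_def by auto
  obtain x where x: "x \<in> \<sigma>"
    using ne by blast
  show "\<sigma> \<in> K"
  proof (cases "\<sigma> = {x}")
    case True
    then show ?thesis
      using x sub unfolding graph_complex_def by blast
  next
    case False
    then obtain y where y: "y \<in> \<sigma>" "y \<noteq> x"
      using x by blast
    have "\<sigma> = {x, y}"
    proof (rule ccontr)
      assume "\<sigma> \<noteq> {x, y}"
      then obtain z where "z \<in> \<sigma>" "z \<noteq> x" "z \<noteq> y"
        using x y by blast
      then show False
        using triangle_free[of x y z] clique x y by blast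
    qed
    then show ?thesis
      using clique x y unfolding graph_complex_def by blast
  qed
next
  fix \<sigma> assume "\<sigma> \<in> K"
  then show "\<sigma> \<in> clique_complex V (\<lambda>x y. {x, y} \<in> Ed)"
  proof (cases rule: simplexE)
    case edge
    then obtain x y where "x \<noteq> y" "x \<in> V" "y \<in> V" "\<sigma> = {x, y}"
      by (rule edgeE)
    with edge show ?thesis
      unfolding clique_complex_def by (auto simp: insert_commute)
  qed (auto simp: clique_complex_def)
qed

lemma boundary_nbhd_vertex: "boundary_nbhd K {v} = {}"
  using card_simplex unfolding boundary_nbhd_def by fastforce

lemma boundary_nbhd_edge:
  assumes "{x, y} \<in> Ed" "x \<noteq> y"
  shows "boundary_nbhd K {x, y} = {{x}, {y}}"
proof -
  have "x \<in> V" "y \<in> V"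
    using edge_subset[OF assms(1)] by auto
  then have "{{x}, {y}} \<subseteq> boundary_nbhd K {x, y}"
    using assms(2) unfolding boundary_nbhd_def by (auto simp: singleton_simplex_iff)
  moreover have "\<tau> \<in> {{x}, {y}}" if "\<tau> \<in> boundary_nbhd K {x, y}" for \<tau>
  proof -
    have "\<tau> \<subseteq> {x, y}" "card \<tau> = 1"
      using that assms(2) unfolding boundary_nbhd_def by auto
    then show ?thesis
      by (auto simp: card_1_singleton_iff)
  qed
  ultimately show ?thesis
    by blast
qed

lemma upper_nbhd_edge:
  assumes "e \<in> Ed"
  shows "upper_nbhd K e = {}"
proof -
  have "card \<delta> \<noteq> 3" if "\<delta> \<in> K" for \<delta>
    using card_simplex[OF that] by auto
  then show ?thesis
    using card_edge[OF assms] unfolding upper_nbhd_def by auto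
qed

lemma upper_nbhd_vertex:
  assumes "v \<in> V"
  shows "upper_nbhd K {v} =
    (\<lambda>u. ({v}, {v, u})) ` neighbours Ed v \<union> (\<lambda>u. ({u}, {v, u})) ` neighbours Ed v"
    (is "_ = ?A \<union> ?B")
proof (intro equalityI subsetI)
  fix p assume p: "p \<in> upper_nbhd K {v}"
  then obtain \<sigma> \<delta> where p_eq: "p = (\<sigma>, \<delta>)" and "\<sigma> \<in> K" "\<delta> \<in> K" "card \<sigma> = 1"
    and "v \<in> \<delta>" "\<sigma> \<subseteq> \<delta>" "card \<delta> = 2"
    unfolding upper_nbhd_def by auto
  moreover have "\<exists>u. \<delta> = {v, u}"
    using \<open>card \<delta> = 2\<close> \<open>v \<in> \<delta>\<close> by (auto simp: card_2_iff)
  moreover have "\<exists>w. \<sigma> = {w}"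
    using \<open>card \<sigma> = 1\<close> by (simp add: card_1_singleton_iff)
  moreover have "\<delta> \<in> Ed"
    using \<open>\<delta> \<in> K\<close> \<open>card \<delta> = 2\<close> by (auto elim: simplexE)
  ultimately show "p \<in> ?A \<union> ?B"
    using p_eq unfolding neighbours_def by auto
next
  fix p assume "p \<in> ?A \<union> ?B"
  then obtain u where u: "{v, u} \<in> Ed" and p: "p = ({v}, {v, u}) \<or> p = ({u}, {v, u})"
    unfolding neighbours_def by auto
  have "u \<noteq> v" "u \<in> V"
    using card_edge[OF u] edge_subset[OF u] by auto
  with u p assms show "p \<in> upper_nbhd K {v}"
    unfolding upper_nbhd_def graph_complex_def by auto
qed

lemma card_upper_nbhd_vertex:
  assumes "v \<in> V"
  shows "card (upper_nbhd K {v}) = 2 * card (neighbours Ed v)"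
proof -
  have v_not_neighbour: "v \<notin> neighbours Ed v"
    using card_edge[of "{v}"] unfolding neighbours_def by auto
  have "neighbours Ed v \<subseteq> V"
    using edge_subset unfolding neighbours_def by blast
  then have "finite (neighbours Ed v)"
    using finite_vertices by (rule finite_subset)
  moreover have "inj_on (\<lambda>u. ({v}, {v, u})) (neighbours Ed v)"
    using v_not_neighbour by (auto simp: inj_on_def doubleton_eq_iff)
  moreover have "inj_on (\<lambda>u. ({u}, {v, u})) (neighbours Ed v)"
    by (auto simp: inj_on_def)
  moreover have
    "(\<lambda>u. ({v}, {v, u})) ` neighbours Ed v \<inter> (\<lambda>u. ({u}, {v, u})) ` neighbours Ed v = {}"
    using v_not_neighbour by auto
  ultimately show ?thesis
    unfolding upper_nbhd_vertex[OF assms] by (simp add: card_Un_disjoint card_image)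
qed

lemma chains_K_1: "chains K 1 = Pow Ed"
proof -
  have "{\<sigma> \<in> K. card \<sigma> = 2} = Ed"
    using card_edge by (auto simp: graph_complex_def)
  then show ?thesis
    unfolding chains_def by (simp add: numeral_2_eq_2)
qed

lemma boundaries_K_1: "boundaries K 1 = {{}}"
proof -
  have "{\<sigma> \<in> K. card \<sigma> = 3} = {}"
    by (auto dest: card_simplex)
  then have "chains K 2 = {{}}"
    unfolding chains_def by (simp add: numeral_3_eq_3)
  moreover have "bd {} = {}"
    unfolding bd_def by simp
  ultimately show ?thesis
    unfolding boundaries_def by (simp add: numeral_2_eq_2)
qed

lemma bd_edge_chain:
  assumes "S \<subseteq> Ed"
  shows "bd S = {{v} | v. odd (card {e \<in> S. v \<in> e})}"
proof -
  have cofaces_singleton: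
    "{\<sigma> \<in> S. {v} \<subseteq> \<sigma> \<and> card \<sigma> = Suc (card {v})} = {e \<in> S. v \<in> e}" for v
    using assms card_edge by auto
  have "\<exists>v. \<tau> = {v}" if "\<tau> \<in> bd S" for \<tau>
  proof -
    have "{\<sigma> \<in> S. \<tau> \<subseteq> \<sigma> \<and> card \<sigma> = Suc (card \<tau>)} \<noteq> {}"
      using that unfolding bd_def by (metis (mono_tags, lifting) card.empty even_zero mem_Collect_eq)
    then obtain \<sigma> where "\<sigma> \<in> S" "card \<sigma> = Suc (card \<tau>)"
      by blast
    then have "card \<tau> = 1"
      using assms card_edge by auto
    then show ?thesis
      by (simp add: card_1_singleton_iff)
  qed
  moreover have "{v} \<in> bd S \<longleftrightarrow> odd (card {e \<in> S. v \<in> e})" for v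
    unfolding bd_def mem_Collect_eq cofaces_singleton by simp
  ultimately show ?thesis
    by blast
qed

lemma cycles_K_1: "cycles K 1 = {S. S \<subseteq> Ed \<and> (\<forall>v. even (card {e \<in> S. v \<in> e}))}"
  unfolding cycles_def chains_K_1 using bd_edge_chain by auto

lemma mem_cycles_K_1_iff: "S \<in> cycles K 1 \<longleftrightarrow> S \<subseteq> Ed \<and> (\<forall>v. even (card (neighbours S v)))"
proof -
  have "card {e \<in> S. v \<in> e} = card (neighbours S v)" if "S \<subseteq> Ed" for v
    using that card_edge by (intro card_incident_edges) blast
  then show ?thesis
    unfolding cycles_K_1 by auto
qed

lemma cycle_path_edges_iff:
  assumes "S \<in> cycles K 1" "{x, v} \<in> Ed" "{v, y} \<in> Ed" "x \<noteq> y" "card (neighbours Ed v) = 2"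
  shows "{x, v} \<in> S \<longleftrightarrow> {v, y} \<in> S"
proof -
  have distinct: "{x, v} \<noteq> {v, y}"
    using assms(4) by (auto simp: doubleton_eq_iff)
  have "{{x, v}, {v, y}} \<subseteq> {e \<in> Ed. v \<in> e}"
    using assms(2,3) by auto
  moreover have "card {e \<in> Ed. v \<in> e} = card {{x, v}, {v, y}}"
    using card_incident_edges[OF card_edge] assms(5) distinct by simp
  ultimately have incident: "{e \<in> Ed. v \<in> e} = {{x, v}, {v, y}}"
    using finite_edges by (intro card_subset_eq[symmetric]) auto
  have "S \<subseteq> Ed" "even (card {e \<in> S. v \<in> e})"
    using assms(1) unfolding cycles_K_1 by auto
  moreover have "{e \<in> S. v \<in> e} = {e \<in> Ed. v \<in> e} \<inter> S" if "S \<subseteq> Ed"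
    using that by blast
  ultimately have "even (card ({{x, v}, {v, y}} \<inter> S))"
    unfolding incident by simp
  then show ?thesis
    using distinct by (simp add: even_card_doubleton_Int_iff)
qed

lemma finite_cycles_K_1: "finite (cycles K 1)"
  unfolding cycles_K_1 using finite_edges by simp

text \<open>Under a constant filtration every simplex is born at time a, and without triangles no
  1-cycle ever dies.\<close>
lemma persistence_diagrams_const_filtration:
  "persistence_diagrams K c (\<lambda>_. a) 1 (a, None) = log 2 (card (cycles K 1))"
proof -
  have filt: "filt c (\<lambda>_. a) \<sigma> = a" if "\<sigma> \<in> K" for \<sigma>
  proof -
    have "\<sigma> \<noteq> {}"
      using card_simplex[OF that] by auto
    then show ?thesis
      unfolding filt_def by (simp add: image_constant_conv)
  qed
  have "sub_le K c (\<lambda>_. a) a = K" "sub_lt K c (\<lambda>_. a) a = {}"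
    unfolding sub_le_def sub_lt_def using filt by auto
  moreover have "cycles K 1 \<inter> boundaries K 1 = {{}}"
    unfolding boundaries_K_1 cycles_K_1 by auto
  then have "pbetti K K 1 = log 2 (card (cycles K 1))"
    unfolding pbetti_def by simp
  moreover have "cycles {} 1 = {{}}"
    unfolding cycles_def chains_def bd_def by auto
  then have "pbetti {} K 1 = 0"
    unfolding pbetti_def boundaries_K_1 by simp
  ultimately show ?thesis
    by simp
qed

end

primrec regular_swl_colours :: "nat \<Rightarrow> nat \<Rightarrow> nat \<Rightarrow> swlcol \<times> swlcol" where
  "regular_swl_colours k d 0 = (Init {#k#}, Init {#k, k#})"
| "regular_swl_colours k d (Suc t) =
     (Step (fst (regular_swl_colours k d t)) {#}
        (replicate_mset (2 * d) (regular_swl_colours k d t)),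
      Step (snd (regular_swl_colours k d t)) (replicate_mset 2 (fst (regular_swl_colours k d t))) {#})"

locale regular_triangle_free_graph = triangle_free_graph +
  fixes d :: nat
  assumes regular: "v \<in> V \<Longrightarrow> card (neighbours Ed v) = d"
begin

lemma swl_const_colouring:
  "\<sigma> \<in> K \<Longrightarrow> swl K (\<lambda>_. k) t \<sigma> =
     (if card \<sigma> = 1 then fst (regular_swl_colours k d t) else snd (regular_swl_colours k d t))"
proof (induction t arbitrary: \<sigma>)
  case 0
  then show ?case
    by (cases rule: simplexE)
      (auto simp: image_mset_mset_set_eq_replicate card_edge numeral_2_eq_2)
next
  case (Suc t)
  have IH_vertex: "swl K (\<lambda>_. k) t \<sigma>' = fst (regular_swl_colours k d t)"
    if "\<sigma>' \<in> K" "card \<sigma>' = 1" for \<sigma>'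
    using Suc.IH that by simp
  have IH_edge: "swl K (\<lambda>_. k) t \<delta> = snd (regular_swl_colours k d t)"
    if "\<delta> \<in> K" "card \<delta> = 2" for \<delta>
    using Suc.IH that by simp
  from Suc.prems show ?case
  proof (cases rule: simplexE)
    case (vertex v)
    have "card (upper_nbhd K {v}) = 2 * d"
      using card_upper_nbhd_vertex regular \<open>v \<in> V\<close> by simp
    then have "image_mset (\<lambda>(\<sigma>', \<delta>). (swl K (\<lambda>_. k) t \<sigma>', swl K (\<lambda>_. k) t \<delta>))
        (mset_set (upper_nbhd K {v})) = replicate_mset (2 * d) (regular_swl_colours k d t)"
      by (subst image_mset_mset_set_eq_replicate)
        (auto simp: upper_nbhd_def IH_vertex IH_edge prod_eq_iff)
    then show ?thesis
      using Suc.IH[OF Suc.prems] vertex by (simp add: boundary_nbhd_vertex)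
  next
    case edge
    obtain x y where "x \<noteq> y" "\<sigma> = {x, y}"
      using edge by (auto elim: edgeE)
    then have "card (boundary_nbhd K \<sigma>) = 2"
      using edge by (simp add: boundary_nbhd_edge)
    then have "image_mset (swl K (\<lambda>_. k) t) (mset_set (boundary_nbhd K \<sigma>))
        = replicate_mset 2 (fst (regular_swl_colours k d t))"
      using edge by (subst image_mset_mset_set_eq_replicate)
        (auto simp: boundary_nbhd_def card_edge IH_vertex)
    then show ?thesis
      using Suc.IH[OF Suc.prems] edge by (simp add: upper_nbhd_edge card_edge)
  qed
qed

lemma swl_const_colouring_multiset:
  "image_mset (swl K (\<lambda>_. k) t) (mset_set K) =
     replicate_mset (card V) (fst (regular_swl_colours k d t))
     + replicate_mset (card Ed) (snd (regular_swl_colours k d t))"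
proof -
  have "(\<lambda>v. {v}) ` V \<inter> Ed = {}"
    using card_edge by fastforce
  then have "mset_set K = mset_set ((\<lambda>v. {v}) ` V) + mset_set Ed"
    unfolding graph_complex_def using finite_vertices finite_edges by (simp add: mset_set_Union)
  moreover have "image_mset (swl K (\<lambda>_. k) t) (mset_set ((\<lambda>v. {v}) ` V))
      = replicate_mset (card V) (fst (regular_swl_colours k d t))"
    by (subst image_mset_mset_set_eq_replicate)
      (auto simp: swl_const_colouring singleton_simplex_iff card_image)
  moreover have "image_mset (swl K (\<lambda>_. k) t) (mset_set Ed)
      = replicate_mset (card Ed) (snd (regular_swl_colours k d t))"
    by (subst image_mset_mset_set_eq_replicate)
      (auto simp: swl_const_colouring edge_simplex card_edge)
  ultimately show ?thesis
    by simp
qed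

end

lemma swl_not_distinguishes_regular_triangle_free:
  assumes "regular_triangle_free_graph V Ed d" "regular_triangle_free_graph V' Ed' d"
    and "card V = card V'" "card Ed = card Ed'"
  shows "\<not> swl_distinguishes (graph_complex V Ed) (\<lambda>_. k) (graph_complex V' Ed') (\<lambda>_. k)"
  using regular_triangle_free_graph.swl_const_colouring_multiset[OF assms(1)]
    regular_triangle_free_graph.swl_const_colouring_multiset[OF assms(2)] assms(3,4)
  unfolding swl_distinguishes_def by simp

definition square :: "nat \<Rightarrow> nat set set" where
  "square a = {{a, a + 1}, {a + 1, a + 2}, {a + 2, a + 3}, {a + 3, a}}"

definition two_squares :: "nat set set" where
  "two_squares = square 0 \<union> square 4"

definition octagon :: "nat set set" where
  "octagon = {{0, 1}, {1, 2}, {2, 3}, {3, 4}, {4, 5}, {5, 6}, {6, 7}, {7, 0}}"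

lemma no_triangle_if_odd_edge_sums:
  fixes Ed :: "nat set set"
  assumes "\<And>x y. {x, y} \<in> Ed \<Longrightarrow> odd (x + y)"
  shows "\<not> ({x, y} \<in> Ed \<and> {y, z} \<in> Ed \<and> {x, z} \<in> Ed)"
proof
  assume "{x, y} \<in> Ed \<and> {y, z} \<in> Ed \<and> {x, z} \<in> Ed"
  then have "odd (x + y)" "odd (y + z)" "odd (x + z)"
    using assms by blast+
  then show False
    by presburger
qed

lemma odd_edge_sums_two_squares: "{x, y} \<in> two_squares \<Longrightarrow> odd (x + y)"
  by (auto simp: two_squares_def square_def doubleton_eq_iff)

lemma odd_edge_sums_octagon: "{x, y} \<in> octagon \<Longrightarrow> odd (x + y)"
  by (auto simp: octagon_def doubleton_eq_iff)

lemma card_neighbours_two_squares: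
  "card (neighbours two_squares v) = (if v \<in> {0..<8} then 2 else 0)"
  by (cases "v \<in> {0..<8}") (auto simp: neighbours_def two_squares_def square_def doubleton_eq_iff
      atLeast0LessThan lessThan_nat_numeral Collect_disj_eq)

lemma card_neighbours_octagon:
  "card (neighbours octagon v) = (if v \<in> {0..<8} then 2 else 0)"
  by (cases "v \<in> {0..<8}") (auto simp: neighbours_def octagon_def doubleton_eq_iff
      atLeast0LessThan lessThan_nat_numeral Collect_disj_eq)

lemma card_neighbours_square:
  "card (neighbours (square a) v) = (if v \<in> {a..a + 3} then 2 else 0)"
proof -
  have "neighbours (square a) v =
    (if v = a then {a + 1, a + 3} else if v = a + 1 then {a, a + 2}
     else if v = a + 2 then {a + 1, a + 3} else if v = a + 3 then {a, a + 2} else {})"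
    by (auto simp: neighbours_def square_def doubleton_eq_iff)
  then show ?thesis
    by auto
qed

interpretation two_squares: regular_triangle_free_graph "{0..<8}" two_squares 2
proof unfold_locales
  show "\<And>x y z. \<lbrakk>{x, y} \<in> two_squares; {y, z} \<in> two_squares; {x, z} \<in> two_squares;
      x \<noteq> y; y \<noteq> z; x \<noteq> z\<rbrakk> \<Longrightarrow> False"
    using no_triangle_if_odd_edge_sums[OF odd_edge_sums_two_squares] by blast
  show "v \<in> {0..<8} \<Longrightarrow> card (neighbours two_squares v) = 2" for v
    by (simp add: card_neighbours_two_squares)
qed (auto simp: two_squares_def square_def)

interpretation octagon: regular_triangle_free_graph "{0..<8}" octagon 2
proof unfold_locales
  show "\<And>x y z. \<lbrakk>{x, y} \<in> octagon; {y, z} \<in> octagon; {x, z} \<in> octagon;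
      x \<noteq> y; y \<noteq> z; x \<noteq> z\<rbrakk> \<Longrightarrow> False"
    using no_triangle_if_odd_edge_sums[OF odd_edge_sums_octagon] by blast
  show "v \<in> {0..<8} \<Longrightarrow> card (neighbours octagon v) = 2" for v
    by (simp add: card_neighbours_octagon)
qed (auto simp: octagon_def)

lemma card_two_squares_eq_card_octagon: "card two_squares = card octagon"
  by (simp add: two_squares_def square_def octagon_def doubleton_eq_iff)

lemma four_le_card_cycles_two_squares: "4 \<le> card (cycles two_squares.K 1)"
proof -
  have "{{}, square 0, square 4, two_squares} \<subseteq> cycles two_squares.K 1"
    unfolding insert_subset two_squares.mem_cycles_K_1_iff
    by (auto simp: card_neighbours_square card_neighbours_two_squares) (auto simp: two_squares_def)
  moreover have "card {{}, square 0, square 4, two_squares} = 4"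
  proof -
    have "{0, 1} \<in> square 0 - square 4" "{4, 5} \<in> square 4 - square 0"
      by (auto simp: square_def doubleton_eq_iff)
    then show ?thesis
      unfolding two_squares_def by (auto simp: card_insert_if)
  qed
  ultimately show ?thesis
    using two_squares.finite_cycles_K_1 by (metis card_mono)
qed

lemma cycles_octagon: "cycles octagon.K 1 = {{}, octagon}"
proof (intro equalityI subsetI)
  fix S assume S: "S \<in> cycles octagon.K 1"
  have path: "{x, v} \<in> S \<longleftrightarrow> {v, y} \<in> S"
    if "{x, v} \<in> octagon" "{v, y} \<in> octagon" "x \<noteq> y" "v < 8" for x v y
    using octagon.cycle_path_edges_iff[OF S] octagon.regular that by simp
  have "{0, 1} \<in> S \<longleftrightarrow> {1, 2} \<in> S" "{1, 2} \<in> S \<longleftrightarrow> {2, 3} \<in> S" "{2, 3} \<in> S \<longleftrightarrow> {3, 4} \<in> S"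
    "{3, 4} \<in> S \<longleftrightarrow> {4, 5} \<in> S" "{4, 5} \<in> S \<longleftrightarrow> {5, 6} \<in> S" "{5, 6} \<in> S \<longleftrightarrow> {6, 7} \<in> S"
    "{6, 7} \<in> S \<longleftrightarrow> {7, 0} \<in> S"
    by (rule path; simp add: octagon_def)+
  moreover have "S \<subseteq> octagon"
    using S unfolding octagon.cycles_K_1 by blast
  ultimately show "S \<in> {{}, octagon}"
    unfolding octagon_def by blast
next
  fix S assume "S \<in> {{}, octagon}"
  then show "S \<in> cycles octagon.K 1"
    unfolding octagon.mem_cycles_K_1_iff by (auto simp: card_neighbours_octagon)
qed

lemma octagon_edgeD:
  "{x, y} \<in> octagon \<Longrightarrow> x < 8 \<and> y < 8 \<and> (y = x + 1 \<or> x = y + 1 \<or> {x, y} = {0, 7})"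
  unfolding octagon_def by (auto simp: doubleton_eq_iff)

lemma octagon_no_4_cycle:
  "\<lbrakk>{a, b} \<in> octagon; {b, c} \<in> octagon; {c, d} \<in> octagon; {d, a} \<in> octagon; a \<noteq> c; b \<noteq> d\<rbrakk>
    \<Longrightarrow> False"
  by (drule octagon_edgeD)+ (auto simp: doubleton_eq_iff)

lemma not_colored_iso_two_squares_octagon: "\<not> colored_iso two_squares.K c octagon.K c'"
proof
  assume iso: "colored_iso two_squares.K c octagon.K c'"
  have "\<Union>two_squares \<subseteq> {0..<8}"
    using two_squares.edge_subset by blast
  then obtain h where inj: "inj_on h {0..<8}"
    and edge: "\<And>x y. {x, y} \<in> two_squares \<Longrightarrow> x \<noteq> y \<Longrightarrow> {h x, h y} \<in> octagon"
    using iso by (rule colored_iso_graph_complexE) blast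
  have "{h 0, h 1} \<in> octagon" "{h 1, h 2} \<in> octagon" "{h 2, h 3} \<in> octagon" "{h 3, h 0} \<in> octagon"
    by (rule edge; simp add: two_squares_def square_def numeral_2_eq_2)+
  moreover have "h 0 \<noteq> h 2" "h 1 \<noteq> h 3"
    using inj by (auto dest: inj_onD)
  ultimately show False
    by (rule octagon_no_4_cycle)
qed

theorem proposition1:
  shows "\<exists>V E c V' E' c'. finite V \<and> finite V' \<and>
           \<not> colored_iso (clique_complex V E) c (clique_complex V' E') c' \<and>
           \<not> swl_distinguishes (clique_complex V E) c (clique_complex V' E') c' \<and>
           (\<exists>f. persistence_diagrams (clique_complex V E) c f
                 \<noteq> persistence_diagrams (clique_complex V' E') c' f)"
proof (intro exI conjI)
  let ?c = "\<lambda>_. 0 :: nat" and ?f = "\<lambda>_. 0 :: real"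
  show "finite {0..<8::nat}" "finite {0..<8::nat}"
    by simp_all
  show "\<not> colored_iso (clique_complex {0..<8} (\<lambda>x y. {x, y} \<in> two_squares)) ?c
      (clique_complex {0..<8} (\<lambda>x y. {x, y} \<in> octagon)) ?c"
    unfolding two_squares.clique_complex_eq octagon.clique_complex_eq
    by (rule not_colored_iso_two_squares_octagon)
  show "\<not> swl_distinguishes (clique_complex {0..<8} (\<lambda>x y. {x, y} \<in> two_squares)) ?c
      (clique_complex {0..<8} (\<lambda>x y. {x, y} \<in> octagon)) ?c"
    unfolding two_squares.clique_complex_eq octagon.clique_complex_eq
    using two_squares.regular_triangle_free_graph_axioms octagon.regular_triangle_free_graph_axioms
      refl card_two_squares_eq_card_octagon
    by (rule swl_not_distinguishes_regular_triangle_free)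
  have "persistence_diagrams two_squares.K ?c ?f 1 (0, None) \<ge> 2"
    unfolding two_squares.persistence_diagrams_const_filtration
    using four_le_card_cycles_two_squares by (simp add: le_log_iff)
  moreover have "persistence_diagrams octagon.K ?c ?f 1 (0, None) = 1"
    unfolding octagon.persistence_diagrams_const_filtration cycles_octagon
    by (simp add: octagon_def)
  ultimately show
    "persistence_diagrams (clique_complex {0..<8} (\<lambda>x y. {x, y} \<in> two_squares)) ?c ?f
      \<noteq> persistence_diagrams (clique_complex {0..<8} (\<lambda>x y. {x, y} \<in> octagon)) ?c ?f"
    unfolding two_squares.clique_complex_eq octagon.clique_complex_eq by force
qed

end
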